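(* Define $E:[0,\pi/2]\to\mathbb{R}$ by $E(0)=0$ and $E(\alpha)=\frac{1}{\sin\alpha}\left(\int_0^\alpha\sqrt{\cos t}\,dt\right)^2$ for $\alpha\in(0,\pi/2]$. Then $E$ is concave on $[0,\pi/2]$, with $E''(\alpha)<0$ for all $\alpha\in(0,\pi/2)$, and $E$ is strictly sub-additive: for all $\alpha,\beta>0$ with $\alpha+\beta\le\pi/2$, $$E(\alpha+\beta)<E(\alpha)+E(\beta).$$ *)

theory Defs
  imports "HOL-Analysis.Analysis"
begin

definition E :: "real \<Rightarrow> real" where
  "E a = (if a = 0 then 0 else (integral {0..a} (\<lambda>t. sqrt (cos t)))\<^sup>2 / sin a)"

end

theory Submission
  imports Defs
begin

text \<open>Write \<open>F(x) = \<integral>\<^sub>0\<^sup>x \<surd>(cos t) dt\<close>, so \<open>E = F\<^sup>2 / sin\<close> on \<open>(0, \<pi>/2]\<close>. Comparing derivatives gives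
  \<open>sin x \<le> F(x) < sin x / \<surd>(cos x)\<close>. With \<open>s = sin x\<close>, \<open>c = cos x\<close>, \<open>r = \<surd>c\<close>, the second
  derivative factors as \<open>E'' = ((s\<^sup>2 + 2c\<^sup>2) F - 2crs) (rF - s) / (r s\<^sup>3)\<close>; the lower bound on \<open>F\<close>
  makes the first factor positive (as \<open>1 + c\<^sup>2 > 2c \<ge> 2cr\<close>) and the upper bound makes the second
  negative. So \<open>E'\<close> is strictly decreasing, which yields concavity (together with continuity of
  \<open>E\<close> at 0, where \<open>0 \<le> E \<le> F / \<surd>cos\<close>) and, since \<open>E(0) = 0\<close>, strict subadditivity:
  \<open>x \<mapsto> E(x + b) - E(x)\<close> is strictly decreasing.\<close>

lemma concave_on_Icc_if_deriv_antimono: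
  fixes f f' :: "real \<Rightarrow> real"
  assumes cont: "continuous_on {a..b} f"
    and deriv: "\<And>x. a < x \<Longrightarrow> x < b \<Longrightarrow> (f has_real_derivative f' x) (at x)"
    and antimono: "\<And>x y. a < x \<Longrightarrow> x \<le> y \<Longrightarrow> y < b \<Longrightarrow> f' y \<le> f' x"
  shows "concave_on {a..b} f"
proof (rule concave_on_linorderI)
  have mean_value: "\<exists>\<xi>. u < \<xi> \<and> \<xi> < v \<and> f v - f u = f' \<xi> * (v - u)"
    if "a \<le> u" "u < v" "v \<le> b" for u v
  proof -
    have "continuous_on {u..v} f"
      using that by (auto intro: continuous_on_subset[OF cont])
    moreover have "(f has_derivative (*) (f' \<xi>)) (at \<xi>)" if "u < \<xi>" "\<xi> < v" for \<xi>
      using deriv[of \<xi>] that \<open>a \<le> u\<close> \<open>v \<le> b\<close> by (simp add: has_field_derivative_def)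
    ultimately show ?thesis
      using mvt[OF \<open>u < v\<close>, of f "\<lambda>\<xi>. (*) (f' \<xi>)"] by blast
  qed
  show "convex {a..b}" by simp
  fix t x y :: real
  assume t: "0 < t" "t < 1" and xy: "x \<in> {a..b}" "y \<in> {a..b}" "x < y"
  define z where "z = (1 - t) * x + t * y"
  have zx: "z - x = t * (y - x)" and yz: "y - z = (1 - t) * (y - x)"
    by (simp_all add: z_def algebra_simps)
  have "0 < t * (y - x)" and "0 < (1 - t) * (y - x)"
    using t xy by simp_all
  then have "x < z" and "z < y"
    unfolding zx[symmetric] yz[symmetric] by simp_all
  then obtain \<xi> \<eta> where \<xi>: "x < \<xi>" "\<xi> < z" "f z - f x = f' \<xi> * (z - x)"
    and \<eta>: "z < \<eta>" "\<eta> < y" "f y - f z = f' \<eta> * (y - z)"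
    using mean_value[of x z] mean_value[of z y] xy by auto
  have "f' \<eta> \<le> f' \<xi>"
    using antimono[of \<xi> \<eta>] \<xi> \<eta> xy by auto
  then have "t * (1 - t) * (y - x) * f' \<eta> \<le> t * (1 - t) * (y - x) * f' \<xi>"
    using t xy by (intro mult_left_mono) auto
  then have "t * (f y - f z) \<le> (1 - t) * (f z - f x)"
    unfolding \<xi>(3) \<eta>(3) zx yz by (simp add: algebra_simps)
  then show "(1 - t) * f x + t * f y \<le> f ((1 - t) *\<^sub>R x + t *\<^sub>R y)"
    by (simp add: z_def algebra_simps)
qed

lemma strict_subadditive_if_deriv_strict_antimono:
  fixes f f' :: "real \<Rightarrow> real"
  assumes cont: "continuous_on {0..c} f" and "f 0 = 0"
    and deriv: "\<And>x. 0 < x \<Longrightarrow> x < c \<Longrightarrow> (f has_real_derivative f' x) (at x)"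
    and antimono: "\<And>x y. 0 < x \<Longrightarrow> x < y \<Longrightarrow> y < c \<Longrightarrow> f' y < f' x"
    and "0 < a" "0 < b" "a + b \<le> c"
  shows "f (a + b) < f a + f b"
proof -
  define h where "h x = f (x + b) - f x" for x
  have "h a < h 0"
  proof (rule DERIV_neg_imp_decreasing_open[OF \<open>0 < a\<close>])
    fix x assume x: "0 < x" "x < a"
    have "((\<lambda>x. f (x + b)) has_real_derivative f' (x + b)) (at x)"
      using deriv[of "x + b"] x assms by (simp add: DERIV_shift)
    then have "(h has_real_derivative f' (x + b) - f' x) (at x)"
      unfolding h_def using x assms by (intro derivative_intros deriv) auto
    moreover have "f' (x + b) < f' x"
      using antimono[of x "x + b"] x assms by auto
    ultimately show "\<exists>y. (h has_real_derivative y) (at x) \<and> y < 0"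
      by auto
  next
    show "continuous_on {0..a} h"
      unfolding h_def using assms
      by (intro continuous_intros continuous_on_compose2[OF cont] continuous_on_subset[OF cont])
        auto
  qed
  then show ?thesis
    using \<open>f 0 = 0\<close> by (simp add: h_def)
qed

lemma deriv_has_real_derivative_on_open:
  assumes "open S" "a \<in> S"
    and "\<And>x. x \<in> S \<Longrightarrow> (f has_real_derivative f' x) (at x)"
    and "(f' has_real_derivative f'') (at a)"
  shows "(deriv f has_real_derivative f'') (at a)"
  using has_field_derivative_transform_within_open[OF assms(4,1,2)] assms(3) DERIV_imp_deriv
  by metis

definition int_sqrt_cos :: "real \<Rightarrow> real" where
  "int_sqrt_cos x = integral {0..x} (\<lambda>t. sqrt (cos t))"

lemma int_sqrt_cos_0 [simp]: "int_sqrt_cos 0 = 0"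
  by (simp add: int_sqrt_cos_def)

lemma continuous_on_int_sqrt_cos: "continuous_on {0..b} int_sqrt_cos"
  unfolding int_sqrt_cos_def
  by (intro indefinite_integral_continuous_1 integrable_continuous_real continuous_intros)

lemma int_sqrt_cos_has_derivative:
  assumes "0 < x"
  shows "(int_sqrt_cos has_real_derivative sqrt (cos x)) (at x)"
proof -
  have "(int_sqrt_cos has_real_derivative sqrt (cos x)) (at x within {0..x + 1})"
    unfolding int_sqrt_cos_def using assms
    by (intro integral_has_real_derivative continuous_intros) auto
  then show ?thesis
    using assms by (simp add: at_within_interior[of x "{0..x + 1}"])
qed

lemma sin_le_int_sqrt_cos:
  assumes "0 \<le> x" "x \<le> pi/2"
  shows "sin x \<le> int_sqrt_cos x"
proof -
  have "int_sqrt_cos 0 - sin 0 \<le> int_sqrt_cos x - sin x"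
  proof (rule DERIV_nonneg_imp_increasing_open[OF assms(1)])
    fix u assume u: "0 < u" "u < x"
    then have "0 \<le> cos u" "cos u \<le> 1"
      using assms by (auto intro!: cos_ge_zero)
    then have "cos u \<le> sqrt (cos u)"
      using mult_left_le[of "sqrt (cos u)" "sqrt (cos u)"] by (simp add: real_sqrt_mult_self)
    moreover have "((\<lambda>u. int_sqrt_cos u - sin u) has_real_derivative sqrt (cos u) - cos u) (at u)"
      using u by (auto intro!: derivative_eq_intros int_sqrt_cos_has_derivative)
    ultimately show "\<exists>y. ((\<lambda>u. int_sqrt_cos u - sin u) has_real_derivative y) (at u) \<and> 0 \<le> y"
      by auto
  qed (intro continuous_intros continuous_on_int_sqrt_cos)
  then show ?thesis by simp
qed

lemma int_sqrt_cos_less_sin_div_sqrt_cos: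
  assumes "0 < x" "x < pi/2"
  shows "int_sqrt_cos x < sin x / sqrt (cos x)"
proof -
  let ?g = "\<lambda>u. sin u / sqrt (cos u) - int_sqrt_cos u"
  have "?g 0 < ?g x"
  proof (rule DERIV_pos_imp_increasing_open[OF assms(1)])
    fix u assume u: "0 < u" "u < x"
    then have c: "0 < cos u" and s: "0 < sin u"
      using assms by (auto intro!: cos_gt_zero_pi sin_gt_zero)
    obtain r where r: "0 < r" "sqrt (cos u) = r" "cos u = r\<^sup>2"
      using c by (metis real_sqrt_gt_zero real_sqrt_pow2 less_imp_le)
    have "(?g has_real_derivative (sin u)\<^sup>2 / (2 * cos u * sqrt (cos u))) (at u)"
      apply (rule derivative_eq_intros refl int_sqrt_cos_has_derivative[OF u(1)] | use c in force)+
      unfolding r(2) unfolding r(3) using r(1) by (simp add: field_simps) algebra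
    moreover have "0 < (sin u)\<^sup>2 / (2 * cos u * sqrt (cos u))"
      using c s by simp
    ultimately show "\<exists>y. (?g has_real_derivative y) (at u) \<and> 0 < y"
      by blast
  next
    have "cos u \<noteq> 0" if "u \<in> {0..x}" for u
      using that assms cos_gt_zero_pi[of u] by auto
    then show "continuous_on {0..x} ?g"
      by (intro continuous_intros continuous_on_int_sqrt_cos) auto
  qed
  then show ?thesis by simp
qed

lemma E_eq_int_sqrt_cos: "0 < x \<Longrightarrow> E x = (int_sqrt_cos x)\<^sup>2 / sin x"
  by (simp add: E_def int_sqrt_cos_def)

definition E' :: "real \<Rightarrow> real" where
  "E' x = 2 * int_sqrt_cos x * sqrt (cos x) / sin x - (int_sqrt_cos x)\<^sup>2 * cos x / (sin x)\<^sup>2"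

definition E'' :: "real \<Rightarrow> real" where
  "E'' x = 2 * cos x / sin x - int_sqrt_cos x / sqrt (cos x)
     - 4 * int_sqrt_cos x * sqrt (cos x) * cos x / (sin x)\<^sup>2
     + (int_sqrt_cos x)\<^sup>2 * ((sin x)\<^sup>2 + 2 * (cos x)\<^sup>2) / (sin x)^3"

lemma E_has_derivative:
  assumes "0 < x" "x < pi"
  shows "(E has_real_derivative E' x) (at x)"
proof -
  have "sin x > 0"
    using assms by (rule sin_gt_zero)
  then have "((\<lambda>x. (int_sqrt_cos x)\<^sup>2 / sin x) has_real_derivative E' x) (at x)"
    using assms
    by (auto intro!: derivative_eq_intros int_sqrt_cos_has_derivative
        simp: E'_def field_simps power2_eq_square)
  then show ?thesis
    by (rule has_field_derivative_transform_within_open[where S="{0<..<pi}"])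
      (use assms in \<open>auto simp: E_eq_int_sqrt_cos\<close>)
qed

lemma E'_has_derivative:
  assumes "0 < x" "x < pi/2"
  shows "(E' has_real_derivative E'' x) (at x)"
proof -
  have c: "0 < cos x" and s: "0 < sin x"
    using assms by (auto intro!: cos_gt_zero_pi sin_gt_zero)
  obtain r where r: "0 < r" "sqrt (cos x) = r" "cos x = r\<^sup>2"
    using c by (metis real_sqrt_gt_zero real_sqrt_pow2 less_imp_le)
  show ?thesis
    unfolding E'_def E''_def
    apply (rule derivative_eq_intros refl int_sqrt_cos_has_derivative[OF assms(1)] | use c s in force)+
    unfolding r(2) unfolding r(3) using r(1) s by (simp add: field_simps) algebra
qed

lemma E''_neg:
  assumes "0 < x" "x < pi/2"
  shows "E'' x < 0"
proof -
  define F s c r where "F = int_sqrt_cos x" and "s = sin x" and "c = cos x" and "r = sqrt (cos x)"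
  have c: "0 < c" "c < 1" and s: "0 < s"
    using assms cos_monotone_0_pi[of 0 x] by (auto simp: c_def s_def intro!: cos_gt_zero_pi sin_gt_zero)
  have r: "0 < r" "r \<le> 1" "r\<^sup>2 = c"
    using c by (auto simp: r_def c_def)
  have "c * r \<le> c"
    using r c by (simp add: mult_left_le)
  have "0 < (1 - c)\<^sup>2"
    using c by simp
  also have "\<dots> \<le> 1 + c\<^sup>2 - 2 * c * r"
    using \<open>c * r \<le> c\<close> by (simp add: power2_diff)
  finally have "2 * c * r * s < s * (1 + c\<^sup>2)"
    using s mult_pos_pos[of s "1 + c\<^sup>2 - 2 * c * r"] by (simp add: algebra_simps)
  also have "1 + c\<^sup>2 = s\<^sup>2 + 2 * c\<^sup>2"
    using sin_cos_squared_add[of x] by (simp add: s_def c_def)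
  also have "s * \<dots> = (s\<^sup>2 + 2 * c\<^sup>2) * s"
    by (rule mult.commute)
  also have "\<dots> \<le> (s\<^sup>2 + 2 * c\<^sup>2) * F"
    using sin_le_int_sqrt_cos[of x] assms by (intro mult_left_mono) (auto simp: F_def s_def)
  finally have left_factor_pos: "0 < (s\<^sup>2 + 2 * c\<^sup>2) * F - 2 * c * r * s"
    by simp
  have right_factor_neg: "r * F - s < 0"
    using int_sqrt_cos_less_sin_div_sqrt_cos[OF assms] r by (simp add: F_def s_def r_def field_simps)
  have "E'' x = ((s\<^sup>2 + 2 * c\<^sup>2) * F - 2 * c * r * s) * (r * F - s) / (r * s^3)"
    unfolding E''_def F_def[symmetric] s_def[symmetric] c_def[symmetric] r_def[symmetric]
    using r s unfolding r(3)[symmetric] by (simp add: field_simps) algebra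
  also have "\<dots> < 0"
    using left_factor_pos right_factor_neg r s by (intro divide_neg_pos mult_pos_neg) auto
  finally show ?thesis .
qed

lemma E'_strict_antimono:
  assumes "0 < x" "x < y" "y < pi/2"
  shows "E' y < E' x"
proof (rule DERIV_neg_imp_decreasing_open[OF assms(2)])
  show "\<exists>z. (E' has_real_derivative z) (at u) \<and> z < 0" if "x < u" "u < y" for u
    using that assms E'_has_derivative[of u] E''_neg[of u] by auto
  show "continuous_on {x..y} E'"
    using assms by (intro continuous_at_imp_continuous_on ballI DERIV_isCont[OF E'_has_derivative]) auto
qed

lemma continuous_on_E: "continuous_on {0..pi/2} E"
proof -
  let ?F = "at 0 within {0..pi/2}"
  have eventually_inside: "\<forall>\<^sub>F x in ?F. 0 < x \<and> x < pi/2"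
    unfolding eventually_at by (intro exI[of _ "pi/2"]) (auto simp: dist_real_def)
  have "(int_sqrt_cos \<longlongrightarrow> 0) ?F"
    using continuous_on_int_sqrt_cos[of "pi/2", unfolded continuous_on_def, rule_format, of 0]
    by simp
  then have "((\<lambda>x. int_sqrt_cos x / sqrt (cos x)) \<longlongrightarrow> 0) ?F"
    using tendsto_divide[of _ 0 ?F "\<lambda>x. sqrt (cos x)" 1] by (auto intro!: tendsto_eq_intros)
  moreover have "\<forall>\<^sub>F x in ?F. 0 \<le> E x \<and> E x \<le> int_sqrt_cos x / sqrt (cos x)"
    using eventually_inside
  proof eventually_elim
    case (elim x)
    then have s: "0 < sin x" and r: "0 < sqrt (cos x)"
      by (auto intro!: sin_gt_zero cos_gt_zero_pi)
    have "0 \<le> int_sqrt_cos x"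
      using sin_le_int_sqrt_cos[of x] elim s by auto
    moreover have "int_sqrt_cos x / sin x \<le> 1 / sqrt (cos x)"
      using int_sqrt_cos_less_sin_div_sqrt_cos[of x] elim s r by (simp add: field_simps)
    ultimately have "int_sqrt_cos x * (int_sqrt_cos x / sin x) \<le> int_sqrt_cos x * (1 / sqrt (cos x))"
      by (rule mult_left_mono[rotated])
    then show ?case
      using elim s by (simp add: E_eq_int_sqrt_cos power2_eq_square)
  qed
  ultimately have "(E \<longlongrightarrow> 0) ?F"
    by (intro tendsto_sandwich[of "\<lambda>_. 0" E ?F "\<lambda>x. int_sqrt_cos x / sqrt (cos x)"])
      (auto elim: eventually_mono)
  then have "continuous ?F E"
    by (simp add: continuous_within E_def)
  moreover have "isCont E x" if "0 < x" "x \<le> pi/2" for x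
    using that by (intro DERIV_isCont[OF E_has_derivative]) auto
  ultimately show ?thesis
    unfolding continuous_on_eq_continuous_within
    by (metis atLeastAtMost_iff continuous_at_imp_continuous_within order_le_less)
qed

theorem proposition4p1:
  shows "concave_on {0..pi/2} E
    \<and> (\<forall>a\<in>{0<..<pi/2}. E differentiable (at a) \<and> deriv E differentiable (at a)
                          \<and> deriv (deriv E) a < 0)
    \<and> (\<forall>a b. a > 0 \<longrightarrow> b > 0 \<longrightarrow> a + b \<le> pi/2 \<longrightarrow> E (a + b) < E a + E b)"
proof (intro conjI ballI allI impI)
  have E_deriv: "(E has_real_derivative E' x) (at x)" if "0 < x" "x < pi/2" for x
    using that by (intro E_has_derivative) auto
  show "concave_on {0..pi/2} E"
  proof (rule concave_on_Icc_if_deriv_antimono[OF continuous_on_E E_deriv])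
    show "E' y \<le> E' x" if "0 < x" "x \<le> y" "y < pi/2" for x y
      using that E'_strict_antimono[of x y] by (cases "x = y") auto
  qed auto
  show "E (a + b) < E a + E b" if "a > 0" "b > 0" "a + b \<le> pi/2" for a b
    using continuous_on_E _ E_deriv E'_strict_antimono that
    by (rule strict_subadditive_if_deriv_strict_antimono) (simp add: E_def)
  fix a :: real
  assume a: "a \<in> {0<..<pi/2}"
  have E'': "(deriv E has_real_derivative E'' a) (at a)"
    using a E_deriv E'_has_derivative[of a]
    by (intro deriv_has_real_derivative_on_open[where S="{0<..<pi/2}"]) auto
  show "E differentiable (at a)"
    using E_deriv[of a] a real_differentiable_def by auto
  show "deriv E differentiable (at a)"
    using E'' real_differentiable_def by auto
  show "deriv (deriv E) a < 0"
    using DERIV_imp_deriv[OF E''] E''_neg a by auto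
qed

end
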